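(* Let $0<q<1$, $0<a<q^{-1}$, $b<q^{-1}$, $c\in\mathbb{C}\setminus\{0\}$ with $\alpha acq^{m}\ne1$, $\alpha bq^m/c\neq1$ for $m\ge1$, and let $\alpha$ satisfy $\sqrt{aq}<\alpha<1/\sqrt{aq}$. For $n\in\mathbb{N}$ and $x=\cos\theta$, $\theta\in[0,\pi]$, \[ \sum_{k=0}^\infty\alpha^k p_n(q^k;a,b;q)\,\frac{(\sqrt{aq})^k}{(q;q)_k}\,Q_k\bigl(x;c\sqrt{aq},\tfrac{b}{c}\sqrt{q/a}\,\big|\,q\bigr) =\frac{\alpha^n(aq)^{n/2}\,(\alpha acq^{n+1},\alpha bq^{n+1}/c;q)_\infty}{(aq;q)_n\,(\alpha\sqrt{aq}\,e^{i\theta},\alpha\sqrt{aq}\,e^{-i\theta};q)_\infty}\;p_n\bigl(x;\alpha\sqrt{aq},c\sqrt{aq},\tfrac{b}{c}\sqrt{q/a},\sqrt{aq}/\alpha\,\big|\,q\bigr). \] In particular, for $\alpha=1$ the right-hand side is $\frac{(aq)^{n/2}(acq^{n+1},bq^{n+1}/c;q)_\infty}{(aq;q)_n(\sqrt{aq}e^{i\theta},\sqrt{aq}e^{-i\theta};q)_\infty}\,p_n(x;\sqrt{aq},c\sqrt{aq},\tfrac bc\sqrt{q/a},\sqrt{aq}|q)$.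
   Context: $(x;q)_k=\prod_{j=0}^{k-1}(1-xq^j)$, $(x;q)_\infty=\prod_{j\ge0}(1-xq^j)$, $(x_1,\dots,x_r;q)_k=\prod_i(x_i;q)_k$. ${}_{r}\phi_{s}\!\left(\begin{smallmatrix}a_1,\dots,a_r\\ b_1,\dots,b_s\end{smallmatrix};q,z\right)=\sum_{j\ge0}\frac{(a_1,\dots,a_r;q)_j}{(q,b_1,\dots,b_s;q)_j}\bigl((-1)^jq^{j(j-1)/2}\bigr)^{1+s-r}z^j$. Little $q$-Jacobi: $p_n(x;a,b;q)={}_2\phi_1\!\left(\begin{smallmatrix}q^{-n},abq^{n+1}\\ aq\end{smallmatrix};q,qx\right)$. Al-Salam–Chihara: $Q_n(x;c_1,c_2|q)=\frac{(c_1c_2;q)_n}{c_1^n}\,{}_3\phi_2\!\left(\begin{smallmatrix}q^{-n},c_1e^{i\theta},c_1e^{-i\theta}\\ c_1c_2,\,0\end{smallmatrix};q,q\right)$. Askey–Wilson: $p_n(x;a_1,a_2,a_3,a_4|q)=a_1^{-n}(a_1a_2,a_1a_3,a_1a_4;q)_n\,{}_4\phi_3\!\left(\begin{smallmatrix}q^{-n},a_1a_2a_3a_4q^{n-1},a_1e^{i\theta},a_1e^{-i\theta}\\ a_1a_2,\,a_1a_3,\,a_1a_4\end{smallmatrix};q,q\right)$, all with $x=\cos\theta$. *)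

theory Defs
  imports "HOL-Analysis.Analysis"
begin

definition qpoch :: "complex \<Rightarrow> real \<Rightarrow> nat \<Rightarrow> complex" where
  "qpoch x q k = (\<Prod>j<k. 1 - x * of_real q ^ j)"

definition qpoch_inf :: "complex \<Rightarrow> real \<Rightarrow> complex" where
  "qpoch_inf x q = (\<Prod>j. 1 - x * of_real q ^ j)"

definition qphi :: "complex list \<Rightarrow> complex list \<Rightarrow> real \<Rightarrow> complex \<Rightarrow> complex" where
  "qphi as bs q z =
     (\<Sum>j. (\<Prod>a\<leftarrow>as. qpoch a q j) / (qpoch (of_real q) q j * (\<Prod>b\<leftarrow>bs. qpoch b q j))
          * (((-1) ^ j * of_real q ^ (j * (j - 1) div 2)) powi (1 + int (length bs) - int (length as)))
          * z ^ j)"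

definition little_q_jacobi :: "nat \<Rightarrow> complex \<Rightarrow> complex \<Rightarrow> complex \<Rightarrow> real \<Rightarrow> complex" where
  "little_q_jacobi n x a b q =
     qphi [inverse (of_real q ^ n), a * b * of_real q ^ (n + 1)] [a * of_real q] q (of_real q * x)"

definition al_salam_chihara :: "nat \<Rightarrow> real \<Rightarrow> complex \<Rightarrow> complex \<Rightarrow> real \<Rightarrow> complex" where
  "al_salam_chihara n x c1 c2 q =
     (let \<theta> = arccos x in
      qpoch (c1 * c2) q n / c1 ^ n *
      qphi [inverse (of_real q ^ n), c1 * cis \<theta>, c1 * cis (- \<theta>)] [c1 * c2, 0] q (of_real q))"

definition askey_wilson :: "nat \<Rightarrow> real \<Rightarrow> complex \<Rightarrow> complex \<Rightarrow> complex \<Rightarrow> complex \<Rightarrow> real \<Rightarrow> complex" where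
  "askey_wilson n x a1 a2 a3 a4 q =
     (let \<theta> = arccos x in
      qpoch (a1 * a2) q n * qpoch (a1 * a3) q n * qpoch (a1 * a4) q n / a1 ^ n *
      qphi [inverse (of_real q ^ n), a1 * a2 * a3 * a4 * of_real q ^ n / of_real q, a1 * cis \<theta>, a1 * cis (- \<theta>)]
           [a1 * a2, a1 * a3, a1 * a4] q (of_real q))"

end

theory Submission
  imports Defs "HOL-Computational_Algebra.Formal_Power_Series"
begin

text \<open>
  Idea: the little q-Jacobi polynomial is a terminating series, \<open>p\<^sub>n(q^k;a,b;q) = \<Sum>\<^sub>j\<^sub>\<le>\<^sub>n w\<^sub>j q^{jk}\<close>.
  Exchanging this finite sum with the series over \<open>k\<close> turns the left-hand side into
  \<open>\<Sum>\<^sub>j w\<^sub>j G(tq^j)\<close>, where \<open>G(s) = (c\<^sub>1s, c\<^sub>2s;q)\<^sub>\<infinity> / (se^{i\<theta>}, se^{-i\<theta>};q)\<^sub>\<infinity>\<close> is the generating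
  function of \<open>Q\<^sub>k(x;c\<^sub>1,c\<^sub>2|q)/(q;q)\<^sub>k\<close>. On the other side, the Askey--Wilson polynomial with
  \<open>a\<^sub>1 = t\<close>, \<open>a\<^sub>4 = aq/t\<close>, \<open>c\<^sub>1c\<^sub>2 = bq\<close> is a terminating \<open>{}_4\<phi>_3\<close> with the same coefficients \<open>w\<^sub>j\<close>, and
  its finite q-Pochhammer symbols recombine with the prefactor into exactly \<open>G(tq^j)\<close>.
\<close>

subsection \<open>Finite and infinite q-Pochhammer symbols\<close>

lemma qpoch_0 [simp]: "qpoch x q 0 = 1"
  by (simp add: qpoch_def)

lemma qpoch_zero_base [simp]: "qpoch 0 q k = 1"
  by (simp add: qpoch_def)

lemma qpoch_Suc: "qpoch x q (Suc k) = qpoch x q k * (1 - x * of_real q ^ k)"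
  by (simp add: qpoch_def)

lemma qpoch_Suc_shift: "qpoch x q (Suc k) = (1 - x) * qpoch (x * of_real q) q k"
  unfolding qpoch_def by (subst prod.lessThan_Suc_shift) (simp add: mult_ac)

text \<open>\<open>(q^{-k};q)_j\<close> vanishes for \<open>j > k\<close>; this makes the hypergeometric series below terminate.\<close>
lemma qpoch_terminates:
  assumes "q \<noteq> 0" "k < j"
  shows "qpoch (inverse (of_real q ^ k)) q j = 0"
proof -
  have "1 - inverse (of_real q ^ k) * (of_real q :: complex) ^ k = 0"
    using assms by simp
  with \<open>k < j\<close> show ?thesis
    unfolding qpoch_def by (intro prod_zero) auto
qed

lemma qpoch_nonzero:
  assumes "\<And>i. i < k \<Longrightarrow> x * of_real q ^ i \<noteq> 1"
  shows "qpoch x q k \<noteq> 0"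
  unfolding qpoch_def using assms by (auto simp: prod_zero_iff)

lemma norm_mult_qpower_le:
  fixes x :: complex
  assumes "0 \<le> q" "q \<le> 1"
  shows "norm (x * of_real q ^ i) \<le> norm x"
  using assms by (simp add: norm_mult norm_power mult_left_le power_le_one)

lemma qpoch_nonzero_small:
  assumes "0 \<le> q" "q \<le> 1" "norm x < 1"
  shows "qpoch x q k \<noteq> 0"
  using norm_mult_qpower_le[OF assms(1,2)] assms(3)
  by (intro qpoch_nonzero) (metis norm_one order.strict_trans1 less_irrefl)

lemma qpoch_inf_convergent:
  fixes x :: complex
  assumes "0 \<le> q" "q < 1"
  shows "convergent_prod (\<lambda>j. 1 - x * of_real q ^ j)"
proof -
  have "summable (\<lambda>j. norm x * q ^ j)"
    using assms by (intro summable_mult summable_geometric) auto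
  then have "summable (\<lambda>j. norm ((1 - x * of_real q ^ j) - 1))"
    using assms by (simp add: norm_mult norm_power)
  then show ?thesis
    by (intro abs_convergent_prod_imp_convergent_prod summable_imp_abs_convergent_prod)
qed

lemma qpoch_LIMSEQ:
  assumes "0 \<le> q" "q < 1"
  shows "(\<lambda>N. qpoch x q N) \<longlonglongrightarrow> qpoch_inf x q"
proof -
  have "(\<lambda>n. \<Prod>i\<le>n. 1 - x * of_real q ^ i) \<longlonglongrightarrow> qpoch_inf x q"
    unfolding qpoch_inf_def by (rule convergent_prod_LIMSEQ[OF qpoch_inf_convergent[OF assms]])
  then have "(\<lambda>n. qpoch x q (Suc n)) \<longlonglongrightarrow> qpoch_inf x q"
    by (simp add: qpoch_def lessThan_Suc_atMost)
  then show ?thesis by (rule LIMSEQ_imp_Suc)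
qed

lemma qpoch_inf_split:
  assumes "0 \<le> q" "q < 1"
  shows "qpoch_inf x q = qpoch x q m * qpoch_inf (x * of_real q ^ m) q"
proof -
  have "(\<lambda>j. 1 - x * of_real q ^ j) has_prod
          ((\<Prod>k<m. 1 - x * of_real q ^ k) * (\<Prod>k. 1 - x * of_real q ^ (k + m)))"
    by (rule has_prod_ignore_initial_segment'[OF qpoch_inf_convergent[OF assms]])
  moreover have "(\<lambda>k. 1 - x * of_real q ^ (k + m)) = (\<lambda>k. 1 - x * of_real q ^ m * of_real q ^ k)"
    by (simp add: power_add mult_ac)
  ultimately show ?thesis
    unfolding qpoch_inf_def qpoch_def using has_prod_unique by metis
qed

lemma qpoch_inf_div_qpoch:
  assumes "0 \<le> q" "q < 1" "qpoch x q m \<noteq> 0"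
  shows "qpoch_inf x q / qpoch x q m = qpoch_inf (x * of_real q ^ m) q"
  using qpoch_inf_split[OF assms(1,2), of x m] assms(3) by simp

lemma qpoch_inf_nonzero:
  assumes "0 \<le> q" "q < 1" "\<And>i. x * of_real q ^ i \<noteq> 1"
  shows "qpoch_inf x q \<noteq> 0"
  unfolding qpoch_inf_def
  by (rule prodinf_nonzero[OF qpoch_inf_convergent[OF assms(1,2)]]) (use assms(3) in auto)

lemma qpoch_inf_nonzero_small:
  assumes "0 \<le> q" "q < 1" "norm x < 1"
  shows "qpoch_inf x q \<noteq> 0"
  using norm_mult_qpower_le[of q x] assms
  by (intro qpoch_inf_nonzero) (auto, metis norm_one order.strict_trans1 less_irrefl)

lemma qpoch_q_nonzero:
  assumes "0 < q" "q < 1"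
  shows "qpoch (of_real q) q k \<noteq> 0"
  using assms by (intro qpoch_nonzero_small) auto

subsection \<open>The q-binomial theorem\<close>

lemma summable_norm_ratio_limit:
  fixes f :: "nat \<Rightarrow> 'a :: real_normed_vector"
  assumes "\<And>m. norm (f (Suc m)) \<le> \<rho> m * norm (f m)" "\<rho> \<longlonglongrightarrow> L" "L < 1"
  shows "summable (\<lambda>m. norm (f m))"
proof -
  define c where "c = (L + 1) / 2"
  have "c < 1" "L < c" using assms(3) by (auto simp: c_def)
  then obtain N where N: "\<And>m. m \<ge> N \<Longrightarrow> \<rho> m < c"
    using order_tendstoD(2)[OF assms(2)] by (auto simp: eventually_sequentially)
  show ?thesis
  proof (rule summable_ratio_test[OF \<open>c < 1\<close>, of N])
    fix m assume "m \<ge> N"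
    have "norm (f (Suc m)) \<le> \<rho> m * norm (f m)" by (rule assms(1))
    also have "\<dots> \<le> c * norm (f m)" using N[OF \<open>m \<ge> N\<close>] by (intro mult_right_mono) auto
    finally show "norm (norm (f (Suc m))) \<le> c * norm (norm (f m))" by simp
  qed
qed

definition qbinom_coeff :: "complex \<Rightarrow> real \<Rightarrow> nat \<Rightarrow> complex" where
  "qbinom_coeff x q m = qpoch x q m / qpoch (of_real q) q m"

lemma qbinom_coeff_0 [simp]: "qbinom_coeff x q 0 = 1"
  by (simp add: qbinom_coeff_def)

lemma one_minus_qpower_nonzero:
  assumes "0 < q" "q < 1" "0 < k"
  shows "1 - (of_real q :: complex) ^ k \<noteq> 0"
proof -
  have "q ^ k < 1" using assms by (simp add: power_less_one_iff)
  then show ?thesis by (metis less_irrefl of_real_1 of_real_eq_iff of_real_power right_minus_eq)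
qed

lemma qbinom_coeff_Suc:
  assumes "0 < q" "q < 1"
  shows "(1 - of_real q ^ Suc m) * qbinom_coeff x q (Suc m) = (1 - x * of_real q ^ m) * qbinom_coeff x q m"
  using qpoch_q_nonzero[OF assms, of m] one_minus_qpower_nonzero[OF assms, of "Suc m"]
  unfolding qbinom_coeff_def by (simp add: qpoch_Suc field_simps)

lemma qbinom_series_summable_norm:
  assumes "0 < q" "q < 1" "norm z < 1"
  shows "summable (\<lambda>m. norm (qbinom_coeff x q m * z ^ m))"
proof (rule summable_norm_ratio_limit)
  fix m
  have pos: "0 < 1 - q ^ Suc m" using power_Suc_less_one[of q m] assms by simp
  then have norm_den: "norm (1 - of_real q ^ Suc m :: complex) = 1 - q ^ Suc m"
    by (metis abs_of_pos norm_of_real of_real_1 of_real_diff of_real_power)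
  have bound: "norm (1 - x * of_real q ^ m) \<le> 1 + norm x * q ^ m"
    using norm_triangle_ineq4[of 1 "x * of_real q ^ m"] assms by (simp add: norm_mult norm_power)
  have "qbinom_coeff x q (Suc m) = (1 - x * of_real q ^ m) * qbinom_coeff x q m / (1 - of_real q ^ Suc m)"
    using qbinom_coeff_Suc[OF assms(1,2), of m x] one_minus_qpower_nonzero[OF assms(1,2), of "Suc m"]
    by (simp add: eq_divide_eq mult.commute)
  then have "qbinom_coeff x q (Suc m) * z ^ Suc m
      = (qbinom_coeff x q m * z ^ m) * ((1 - x * of_real q ^ m) * z / (1 - of_real q ^ Suc m))"
    by (simp add: ac_simps times_divide_eq_right)
  then have "norm (qbinom_coeff x q (Suc m) * z ^ Suc m)
      = norm (qbinom_coeff x q m * z ^ m) * (norm (1 - x * of_real q ^ m) * norm z / (1 - q ^ Suc m))"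
    by (simp only: norm_mult norm_divide norm_den)
  also have "\<dots> \<le> norm (qbinom_coeff x q m * z ^ m) * ((1 + norm x * q ^ m) * norm z / (1 - q ^ Suc m))"
    using pos by (intro mult_left_mono[OF divide_right_mono[OF mult_right_mono[OF bound]]]) auto
  finally show "norm (qbinom_coeff x q (Suc m) * z ^ Suc m)
      \<le> ((1 + norm x * q ^ m) * norm z / (1 - q ^ Suc m)) * norm (qbinom_coeff x q m * z ^ m)"
    by (simp add: mult.commute)
next
  have "(\<lambda>m. q ^ m) \<longlonglongrightarrow> 0" using assms by (intro LIMSEQ_power_zero) auto
  moreover from this have "(\<lambda>m. q ^ Suc m) \<longlonglongrightarrow> 0" by (rule LIMSEQ_Suc)
  ultimately show "(\<lambda>m. (1 + norm x * q ^ m) * norm z / (1 - q ^ Suc m)) \<longlonglongrightarrow> (1 + norm x * 0) * norm z / (1 - 0)"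
    using assms by (intro tendsto_intros) auto
qed (use assms in simp)

lemma qbinom_series_summable:
  assumes "0 < q" "q < 1" "norm z < 1"
  shows "summable (\<lambda>m. qbinom_coeff x q m * z ^ m)"
  using summable_norm_cancel[OF qbinom_series_summable_norm[OF assms]] .

lemma qbinom_series_functional_eq:
  assumes q: "0 < q" "q < 1" and z: "norm z < 1"
  shows "(1 - z) * (\<Sum>m. qbinom_coeff x q m * z ^ m)
       = (1 - x * z) * (\<Sum>m. qbinom_coeff x q m * (of_real q * z) ^ m)"
proof -
  define f where "f m = qbinom_coeff x q m * z ^ m" for m
  define g where "g m = qbinom_coeff x q m * (of_real q * z) ^ m" for m
  have qz: "norm (of_real q * z) < 1"
    using norm_mult_qpower_le[of q z 1] q z by (simp add: mult.commute)
  have sf: "f sums (\<Sum>m. f m)" unfolding f_def by (rule summable_sums[OF qbinom_series_summable[OF q z]])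
  have sg: "g sums (\<Sum>m. g m)" unfolding g_def by (rule summable_sums[OF qbinom_series_summable[OF q qz]])
  have shift: "f (Suc m) - g (Suc m) = z * (f m - x * g m)" for m
  proof -
    have "f (Suc m) - g (Suc m) = (1 - of_real q ^ Suc m) * qbinom_coeff x q (Suc m) * z ^ Suc m"
      by (simp add: f_def g_def power_mult_distrib algebra_simps)
    also have "\<dots> = (1 - x * of_real q ^ m) * qbinom_coeff x q m * z ^ Suc m"
      by (simp only: qbinom_coeff_Suc[OF q])
    finally show ?thesis by (simp add: f_def g_def power_mult_distrib algebra_simps)
  qed
  have "(\<lambda>m. f m - g m) sums ((\<Sum>m. f m) - (\<Sum>m. g m))" by (rule sums_diff[OF sf sg])
  moreover have "f 0 - g 0 = 0" by (simp add: f_def g_def)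
  ultimately have "(\<lambda>m. f (Suc m) - g (Suc m)) sums ((\<Sum>m. f m) - (\<Sum>m. g m))"
    using sums_Suc_iff[of "\<lambda>m. f m - g m"] by simp
  then have "(\<lambda>m. z * (f m - x * g m)) sums ((\<Sum>m. f m) - (\<Sum>m. g m))"
    by (simp only: shift)
  moreover have "(\<lambda>m. z * (f m - x * g m)) sums (z * ((\<Sum>m. f m) - x * (\<Sum>m. g m)))"
    by (intro sums_mult sums_diff sf sg)
  ultimately have "(\<Sum>m. f m) - (\<Sum>m. g m) = z * ((\<Sum>m. f m) - x * (\<Sum>m. g m))"
    using sums_unique2 by blast
  then show ?thesis unfolding f_def g_def by (simp add: algebra_simps)
qed

lemma qbinom_series_iterate:
  assumes q: "0 < q" "q < 1" and z: "norm z < 1"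
  shows "(\<Sum>m. qbinom_coeff x q m * z ^ m) * qpoch z q N
       = (\<Sum>m. qbinom_coeff x q m * (of_real q ^ N * z) ^ m) * qpoch (x * z) q N"
proof (induction N)
  case (Suc N)
  define w where "w = of_real q ^ N * z"
  have "norm w < 1"
    using norm_mult_qpower_le[of q z N] q z by (simp add: w_def mult.commute)
  have "(\<Sum>m. qbinom_coeff x q m * z ^ m) * qpoch z q (Suc N)
      = ((\<Sum>m. qbinom_coeff x q m * w ^ m) * (1 - w)) * qpoch (x * z) q N"
    using Suc by (simp add: w_def qpoch_Suc mult_ac)
  also have "\<dots> = (\<Sum>m. qbinom_coeff x q m * (of_real q * w) ^ m) * ((1 - x * w) * qpoch (x * z) q N)"
    using qbinom_series_functional_eq[OF q \<open>norm w < 1\<close>, of x] by (simp add: mult_ac)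
  finally show ?case by (simp add: w_def qpoch_Suc mult_ac)
qed simp

text \<open>The q-binomial theorem \<open>\<Sum>_m (x;q)_m/(q;q)_m z^m = (xz;q)_\<infinity> / (z;q)_\<infinity>\<close> for \<open>|z| < 1\<close>:
  let \<open>N \<rightarrow> \<infinity>\<close> in the iterated functional equation, using continuity of the power series at 0.\<close>
theorem q_binomial:
  assumes q: "0 < q" "q < 1" and z: "norm z < 1"
  shows "(\<lambda>m. qbinom_coeff x q m * z ^ m) sums (qpoch_inf (x * z) q / qpoch_inf z q)"
proof -
  define F where "F w = (\<Sum>m. qbinom_coeff x q m * w ^ m)" for w
  define r where "r = (1 + norm z) / 2"
  have "0 < r" "r < 1"
    unfolding r_def using add_pos_nonneg[OF zero_less_one norm_ge_zero[of z]] z by simp_all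
  then have r: "norm (of_real r :: complex) < 1" "norm (0::complex) < norm (of_real r :: complex)"
    by simp_all
  have "(\<lambda>N. of_real q ^ N * z) \<longlonglongrightarrow> 0"
    using q by (intro tendsto_mult_left_zero LIMSEQ_power_zero) auto
  then have "(\<lambda>N. F (of_real q ^ N * z)) \<longlonglongrightarrow> F 0"
    unfolding F_def by (intro isCont_tendsto_compose[OF isCont_powser[OF qbinom_series_summable[OF q r(1)] r(2)]])
  moreover have "F 0 = 1" unfolding F_def using powser_zero[of "qbinom_coeff x q"] by simp
  ultimately have "(\<lambda>N. F (of_real q ^ N * z) * qpoch (x * z) q N) \<longlonglongrightarrow> 1 * qpoch_inf (x * z) q"
    using q by (intro tendsto_mult qpoch_LIMSEQ) auto
  moreover have "(\<lambda>N. F z * qpoch z q N) \<longlonglongrightarrow> F z * qpoch_inf z q"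
    using q by (intro tendsto_mult tendsto_const qpoch_LIMSEQ) auto
  moreover have "F z * qpoch z q N = F (of_real q ^ N * z) * qpoch (x * z) q N" for N
    unfolding F_def by (rule qbinom_series_iterate[OF q z])
  ultimately have "F z * qpoch_inf z q = qpoch_inf (x * z) q"
    using LIMSEQ_unique by fastforce
  moreover have "qpoch_inf z q \<noteq> 0" using q z by (intro qpoch_inf_nonzero_small) auto
  ultimately have "F z = qpoch_inf (x * z) q / qpoch_inf z q" by (simp add: field_simps)
  then show ?thesis unfolding F_def using summable_sums[OF qbinom_series_summable[OF q z, of x]] by simp
qed

subsection \<open>Terminating balanced series\<close>

text \<open>A series \<open>{}_{r+1}\<phi>_r\<close> with top parameter \<open>q^{-n}\<close> is a finite sum over \<open>j \<le> n\<close>;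
  the quadratic power of \<open>q\<close> in the general term is absent since the series is balanced in length.\<close>
lemma qphi_terminating:
  assumes "q \<noteq> 0" "length as = length bs"
  shows "qphi (inverse (of_real q ^ n) # as) bs q z =
    (\<Sum>j<Suc n. qpoch (inverse (of_real q ^ n)) q j * (\<Prod>a\<leftarrow>as. qpoch a q j)
        / (qpoch (of_real q) q j * (\<Prod>b\<leftarrow>bs. qpoch b q j)) * z ^ j)"
  unfolding qphi_def list.map prod_list.Cons using assms(2)
  by (subst suminf_finite[of "{..<Suc n}"]) (use assms(1) qpoch_terminates in auto)

definition little_q_jacobi_coeff :: "nat \<Rightarrow> complex \<Rightarrow> complex \<Rightarrow> real \<Rightarrow> nat \<Rightarrow> complex" where
  "little_q_jacobi_coeff n a b q j =
     qpoch (inverse (of_real q ^ n)) q j * qpoch (a * b * of_real q ^ (n + 1)) q j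
     / (qpoch (of_real q) q j * qpoch (a * of_real q) q j) * of_real q ^ j"

lemma little_q_jacobi_sum:
  assumes "q \<noteq> 0"
  shows "little_q_jacobi n x a b q = (\<Sum>j<Suc n. little_q_jacobi_coeff n a b q j * x ^ j)"
  unfolding little_q_jacobi_def little_q_jacobi_coeff_def
  by (subst qphi_terminating[OF assms]) (simp_all add: power_mult_distrib mult_ac)

lemma askey_wilson_sum:
  assumes "q \<noteq> 0" "0 \<le> \<theta>" "\<theta> \<le> pi"
  shows "askey_wilson n (cos \<theta>) a1 a2 a3 a4 q =
    qpoch (a1 * a2) q n * qpoch (a1 * a3) q n * qpoch (a1 * a4) q n / a1 ^ n *
    (\<Sum>j<Suc n. qpoch (inverse (of_real q ^ n)) q j * qpoch (a1 * a2 * a3 * a4 * of_real q ^ n / of_real q) q j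
      * qpoch (a1 * cis \<theta>) q j * qpoch (a1 * cis (- \<theta>)) q j
      / (qpoch (of_real q) q j * qpoch (a1 * a2) q j * qpoch (a1 * a3) q j * qpoch (a1 * a4) q j)
      * of_real q ^ j)"
  unfolding askey_wilson_def Let_def arccos_cos[OF assms(2,3)]
  by (subst qphi_terminating[OF assms(1)]) (simp_all add: mult_ac)

subsection \<open>Al-Salam--Chihara polynomials: explicit sum and three-term recurrence\<close>

text \<open>The rational identity behind the recurrence in the degree of the coefficients of the
  \<open>{}_3\<phi>_2\<close> series; here \<open>w = q^{-k}\<close>, \<open>y = q^k\<close>, \<open>x = q^i\<close>, \<open>Q = q\<close>.\<close>
lemma asc_rational_identity:
  fixes Q x y w c1 c2 :: complex
  assumes wy: "w * y = 1" and nz: "Q \<noteq> 0" "x \<noteq> 0" "c1 \<noteq> 0" "w \<noteq> 1"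
  shows "(1 - c1*c2*y) * (1 - w/Q)
    = c1 * (1 - w*x) * (1/(c1*(Q*x)) + c1*(Q*x) - (c1+c2)*y)
      - (1 - Q*x) * (1 - c1*c2*x) / (Q*x)
      - c1^2 * (1 - y) * ((1 - w*x) * (1 - w*(Q*x)) / (1 - w))"
proof -
  have w1: "1 - w \<noteq> 0" using nz by simp
  define M where "M = Q * x * (1 - w)"
  have "M \<noteq> 0" unfolding M_def using nz w1 by simp
  have cleared: "(1 - c1*c2*y) * (Q - w) * x * (1 - w)
    = (1 - w*x) * (1 + c1^2*Q^2*x^2 - c1*(c1+c2)*y*Q*x) * (1 - w)
      - (1 - Q*x) * (1 - c1*c2*x) * (1 - w)
      - c1^2 * (1 - y) * (1 - w*x) * (1 - w*Q*x) * Q * x"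
    using wy by algebra
  have lhs: "(1 - c1*c2*y) * (1 - w/Q) * M = (1 - c1*c2*y) * (Q - w) * x * (1 - w)"
    unfolding M_def using nz by (simp add: field_simps)
  have term1: "c1 * (1 - w*x) * (1/(c1*(Q*x)) + c1*(Q*x) - (c1+c2)*y) * M
      = (1 - w*x) * (1 + c1^2*Q^2*x^2 - c1*(c1+c2)*y*Q*x) * (1 - w)"
    unfolding M_def using nz by (simp add: field_simps power2_eq_square)
  have term2: "(1 - Q*x) * (1 - c1*c2*x) / (Q*x) * M = (1 - Q*x) * (1 - c1*c2*x) * (1 - w)"
    unfolding M_def using nz by (simp add: field_simps)
  have term3: "c1^2 * (1 - y) * ((1 - w*x) * (1 - w*(Q*x)) / (1 - w)) * M
      = c1^2 * (1 - y) * (1 - w*x) * (1 - w*Q*x) * Q * x"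
    unfolding M_def using w1 by (simp add: field_simps)
  have "(1 - c1*c2*y) * (1 - w/Q) * M = (c1 * (1 - w*x) * (1/(c1*(Q*x)) + c1*(Q*x) - (c1+c2)*y)
      - (1 - Q*x) * (1 - c1*c2*x) / (Q*x)
      - c1^2 * (1 - y) * ((1 - w*x) * (1 - w*(Q*x)) / (1 - w))) * M"
  proof -
    have distrib: "(a - b - c) * M = a * M - b * M - c * M" for a b c :: complex
      by (simp only: left_diff_distrib)
    show ?thesis unfolding distrib term1 term2 term3 lhs cleared ..
  qed
  with \<open>M \<noteq> 0\<close> show ?thesis by simp
qed

locale asc_setting =
  fixes q :: real and c1 c2 :: complex and \<theta> :: real
  assumes q_pos: "0 < q" and q_less_1: "q < 1" and c1_nonzero: "c1 \<noteq> 0"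
    and c1c2_ne_1: "\<And>i. c1 * c2 * of_real q ^ i \<noteq> 1"
begin

abbreviation Q :: complex where "Q \<equiv> of_real q"

definition e :: complex where "e = cis \<theta>"
definition e' :: complex where "e' = cis (- \<theta>)"

lemma e_e': "e * e' = 1"
  unfolding e_def e'_def by (simp add: cis_mult)

lemma norm_e [simp]: "norm e = 1" "norm e' = 1"
  unfolding e_def e'_def by simp_all

lemma Q_nonzero: "Q \<noteq> 0"
  using q_pos by simp

lemma qpoch_Q_nonzero: "qpoch Q q j \<noteq> 0"
  using qpoch_q_nonzero[OF q_pos q_less_1] .

lemma qpoch_c1c2_nonzero: "qpoch (c1 * c2) q j \<noteq> 0"
  using c1c2_ne_1 by (intro qpoch_nonzero) auto

lemma one_minus_Q_Suc_nonzero: "1 - Q * Q ^ j \<noteq> 0"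
  using one_minus_qpower_nonzero[OF q_pos q_less_1, of "Suc j"] by simp

lemma one_minus_c1c2_nonzero: "1 - c1 * c2 * Q ^ j \<noteq> 0"
  using c1c2_ne_1[of j] by simp

text \<open>The pieces of the \<open>{}_3\<phi>_2\<close> representation of \<open>Q\<^sub>k/(q;q)\<^sub>k\<close>:
  \<open>(c\<^sub>1e, c\<^sub>1e';q)\<^sub>j\<close>, the normalisation \<open>(c\<^sub>1c\<^sub>2;q)\<^sub>k/((q;q)\<^sub>k c\<^sub>1^k)\<close>, and the coefficient
  \<open>(q^{-k};q)\<^sub>j q^j/((q,c\<^sub>1c\<^sub>2;q)\<^sub>j)\<close>.\<close>
definition theta_poch :: "nat \<Rightarrow> complex" where
  "theta_poch j = qpoch (c1 * e) q j * qpoch (c1 * e') q j"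

definition asc_scale :: "nat \<Rightarrow> complex" where
  "asc_scale k = qpoch (c1 * c2) q k / (qpoch Q q k * c1 ^ k)"

definition asc_coeff :: "nat \<Rightarrow> nat \<Rightarrow> complex" where
  "asc_coeff k j = qpoch (inverse (Q ^ k)) q j * Q ^ j / (qpoch Q q j * qpoch (c1 * c2) q j)"

definition asc_sum :: "nat \<Rightarrow> complex" where
  "asc_sum k = (\<Sum>j<Suc k. asc_scale k * asc_coeff k j * theta_poch j)"

lemma asc_sum_eq:
  assumes "0 \<le> \<theta>" "\<theta> \<le> pi"
  shows "al_salam_chihara k (cos \<theta>) c1 c2 q / qpoch Q q k = asc_sum k"
proof -
  have "al_salam_chihara k (cos \<theta>) c1 c2 q
      = qpoch (c1 * c2) q k / c1 ^ k * (\<Sum>j<Suc k. asc_coeff k j * theta_poch j)"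
    unfolding al_salam_chihara_def Let_def arccos_cos[OF assms]
    by (subst qphi_terminating) (simp_all add: q_pos[THEN less_imp_neq, symmetric] theta_poch_def
        asc_coeff_def e_def e'_def mult_ac)
  moreover have "asc_sum k = asc_scale k * (\<Sum>j<Suc k. asc_coeff k j * theta_poch j)"
    unfolding asc_sum_def sum_distrib_left by (simp add: mult_ac)
  ultimately have "c1 ^ k * al_salam_chihara k (cos \<theta>) c1 c2 q = c1 ^ k * (qpoch Q q k * asc_sum k)"
    using qpoch_Q_nonzero c1_nonzero by (simp add: asc_scale_def field_simps)
  then show ?thesis
    using qpoch_Q_nonzero[of k] c1_nonzero by (simp add: nonzero_divide_eq_eq mult.commute)
qed

lemma asc_coeff_0 [simp]: "asc_coeff k 0 = 1"
  by (simp add: asc_coeff_def)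

lemma asc_coeff_vanishes: "k < j \<Longrightarrow> asc_coeff k j = 0"
  unfolding asc_coeff_def using qpoch_terminates[of q k j] q_pos by simp

lemma asc_sum_extend: "Suc k \<le> N \<Longrightarrow> asc_sum k = (\<Sum>j<N. asc_scale k * asc_coeff k j * theta_poch j)"
  unfolding asc_sum_def by (rule sum.mono_neutral_left) (auto simp: asc_coeff_vanishes)

text \<open>Multiplication by \<open>e + e' = 2 cos \<theta>\<close> acts on \<open>(c\<^sub>1e, c\<^sub>1e';q)\<^sub>j\<close> as a two-term operator.\<close>
lemma theta_poch_Suc:
  "theta_poch (Suc j) = theta_poch j * (1 - c1 * (e + e') * Q ^ j + c1 ^ 2 * Q ^ (2 * j))"
proof -
  have "(1 - c1 * e * Q ^ j) * (1 - c1 * e' * Q ^ j)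
      = 1 - c1 * (e + e') * Q ^ j + c1 ^ 2 * (e * e') * Q ^ (2 * j)"
    by (simp add: algebra_simps power2_eq_square power_mult mult_2)
  then show ?thesis unfolding theta_poch_def qpoch_Suc using e_e' by (simp add: mult_ac)
qed

lemma cos_times_theta_poch:
  "(e + e') * theta_poch j
     = (1 / (c1 * Q ^ j) + c1 * Q ^ j) * theta_poch j - theta_poch (Suc j) / (c1 * Q ^ j)"
  using c1_nonzero Q_nonzero unfolding theta_poch_Suc
  by (simp add: field_simps power2_eq_square power_mult mult_2 power_add)

lemma asc_coeff_factored:
  fixes m i :: nat
  defines "w \<equiv> inverse (Q ^ Suc m)" and "x \<equiv> Q ^ i"
  defines "M \<equiv> qpoch w q i * (Q * x) / (qpoch Q q i * qpoch (c1 * c2) q i * (1 - Q * x) * (1 - c1 * c2 * x))"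
  shows "asc_coeff (Suc (Suc m)) (Suc i) = M * (1 - w / Q)"
    and "asc_coeff (Suc m) (Suc i) = M * (1 - w * x)"
    and "asc_coeff (Suc m) i / Q ^ i = M * ((1 - Q * x) * (1 - c1 * c2 * x) / (Q * x))"
    and "asc_coeff m (Suc i) = M * ((1 - w * x) * (1 - w * (Q * x)) / (1 - w))"
proof -
  have den: "qpoch Q q (Suc i) * qpoch (c1 * c2) q (Suc i)
      = qpoch Q q i * qpoch (c1 * c2) q i * (1 - Q * x) * (1 - c1 * c2 * x)"
    unfolding x_def by (simp add: qpoch_Suc mult_ac)
  have nz: "x \<noteq> 0" "1 - Q * x \<noteq> 0" "1 - c1 * c2 * x \<noteq> 0"
    "qpoch Q q i * qpoch (c1 * c2) q i \<noteq> 0"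
    unfolding x_def using Q_nonzero one_minus_Q_Suc_nonzero one_minus_c1c2_nonzero
      qpoch_Q_nonzero qpoch_c1c2_nonzero by auto
  have "Q ^ Suc m \<noteq> 1" using one_minus_qpower_nonzero[OF q_pos q_less_1, of "Suc m"] by auto
  then have "w \<noteq> 1" unfolding w_def by (metis inverse_1 inverse_inverse_eq)
  have "qpoch (inverse (Q ^ Suc (Suc m))) q (Suc i) = (1 - w / Q) * qpoch w q i"
    using Q_nonzero qpoch_Suc_shift[of "w / Q" q i] unfolding w_def by (simp add: field_simps)
  then show "asc_coeff (Suc (Suc m)) (Suc i) = M * (1 - w / Q)"
    unfolding asc_coeff_def den M_def by (simp add: x_def mult_ac)
  show "asc_coeff (Suc m) (Suc i) = M * (1 - w * x)"
    unfolding asc_coeff_def den M_def w_def x_def by (simp add: qpoch_Suc mult_ac)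
  have "asc_coeff (Suc m) i / Q ^ i = qpoch w q i / (qpoch Q q i * qpoch (c1 * c2) q i)"
    unfolding asc_coeff_def w_def using Q_nonzero by simp
  moreover have "M * ((1 - Q * x) * (1 - c1 * c2 * x) / (Q * x))
      = qpoch w q i / (qpoch Q q i * qpoch (c1 * c2) q i)"
  proof -
    have cancel: "W * c / (D * u * v) * (u * v / c) = W / D"
      if "c \<noteq> 0" "D \<noteq> 0" "u \<noteq> 0" "v \<noteq> 0" for W c D u v :: complex
      using that by (simp add: field_simps)
    show ?thesis
      unfolding M_def using nz Q_nonzero by (intro cancel) auto
  qed
  ultimately show "asc_coeff (Suc m) i / Q ^ i = M * ((1 - Q * x) * (1 - c1 * c2 * x) / (Q * x))"
    by simp
  have "qpoch w q (Suc (Suc i)) = (1 - w) * qpoch (w * Q) q (Suc i)"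
    by (rule qpoch_Suc_shift)
  then have "qpoch (w * Q) q (Suc i) = qpoch w q i * (1 - w * x) * (1 - w * (Q * x)) / (1 - w)"
    using \<open>w \<noteq> 1\<close> unfolding x_def by (simp add: qpoch_Suc field_simps)
  moreover have "inverse (Q ^ m) = w * Q" unfolding w_def using Q_nonzero by (simp add: field_simps)
  ultimately show "asc_coeff m (Suc i) = M * ((1 - w * x) * (1 - w * (Q * x)) / (1 - w))"
    unfolding asc_coeff_def den M_def by (simp add: x_def mult_ac)
qed

lemma asc_coeff_recurrence:
  "(1 - c1 * c2 * Q ^ Suc m) * asc_coeff (Suc (Suc m)) j
    = c1 * asc_coeff (Suc m) j * ((1 / (c1 * Q ^ j) + c1 * Q ^ j) - (c1 + c2) * Q ^ Suc m)
      - (if j = 0 then 0 else asc_coeff (Suc m) (j - 1) / Q ^ (j - 1))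
      - c1 ^ 2 * (1 - Q ^ Suc m) * asc_coeff m j"
proof (cases j)
  case 0
  then show ?thesis using c1_nonzero by (simp add: field_simps power2_eq_square)
next
  case (Suc i)
  define w where "w = inverse (Q ^ Suc m)"
  define x where "x = Q ^ i"
  define M where "M = qpoch w q i * (Q * x) / (qpoch Q q i * qpoch (c1 * c2) q i * (1 - Q * x) * (1 - c1 * c2 * x))"
  note factored = asc_coeff_factored[of m i, folded w_def x_def, folded M_def]
  have "Q ^ Suc m \<noteq> 1" using one_minus_qpower_nonzero[OF q_pos q_less_1, of "Suc m"] by auto
  then have "w \<noteq> 1" unfolding w_def by (metis inverse_1 inverse_inverse_eq)
  have identity: "(1 - c1 * c2 * Q ^ Suc m) * (1 - w / Q)
    = c1 * (1 - w * x) * (1 / (c1 * (Q * x)) + c1 * (Q * x) - (c1 + c2) * Q ^ Suc m)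
      - (1 - Q * x) * (1 - c1 * c2 * x) / (Q * x)
      - c1 ^ 2 * (1 - Q ^ Suc m) * ((1 - w * x) * (1 - w * (Q * x)) / (1 - w))"
  proof (rule asc_rational_identity)
    show "w * Q ^ Suc m = 1" unfolding w_def by (rule left_inverse) (use Q_nonzero in simp)
  qed (use Q_nonzero c1_nonzero \<open>w \<noteq> 1\<close> in \<open>simp_all add: x_def\<close>)
  have "(1 - c1 * c2 * Q ^ Suc m) * asc_coeff (Suc (Suc m)) j
      = M * ((1 - c1 * c2 * Q ^ Suc m) * (1 - w / Q))"
    unfolding Suc factored by (simp add: mult_ac)
  also have "\<dots> = M * (c1 * (1 - w * x) * (1 / (c1 * (Q * x)) + c1 * (Q * x) - (c1 + c2) * Q ^ Suc m))
      - M * ((1 - Q * x) * (1 - c1 * c2 * x) / (Q * x))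
      - M * (c1 ^ 2 * (1 - Q ^ Suc m) * ((1 - w * x) * (1 - w * (Q * x)) / (1 - w)))"
    unfolding identity by (simp add: right_diff_distrib)
  also have "\<dots> = c1 * asc_coeff (Suc m) j * ((1 / (c1 * Q ^ j) + c1 * Q ^ j) - (c1 + c2) * Q ^ Suc m)
      - (if j = 0 then 0 else asc_coeff (Suc m) (j - 1) / Q ^ (j - 1))
      - c1 ^ 2 * (1 - Q ^ Suc m) * asc_coeff m j"
    unfolding Suc factored by (simp add: x_def mult_ac factored(3)[unfolded x_def])
  finally show ?thesis .
qed

lemma asc_term_recurrence:
  "(1 - Q ^ Suc (Suc m)) * (asc_scale (Suc (Suc m)) * asc_coeff (Suc (Suc m)) j)
    = asc_scale (Suc m) * asc_coeff (Suc m) j * ((1 / (c1 * Q ^ j) + c1 * Q ^ j) - (c1 + c2) * Q ^ Suc m)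
      - (if j = 0 then 0 else asc_scale (Suc m) * asc_coeff (Suc m) (j - 1) / (c1 * Q ^ (j - 1)))
      - (1 - c1 * c2 * Q ^ m) * (asc_scale m * asc_coeff m j)"
proof -
  define K where "K = Suc m"
  have scale_up: "(1 - Q ^ Suc K) * asc_scale (Suc K) = asc_scale K * (1 - c1 * c2 * Q ^ K) / c1"
    unfolding asc_scale_def using qpoch_Q_nonzero[of K] one_minus_Q_Suc_nonzero[of K] c1_nonzero
    by (simp add: qpoch_Suc field_simps)
  have scale_down: "(1 - c1 * c2 * Q ^ m) * asc_scale m = asc_scale K * c1 * (1 - Q ^ K)"
    unfolding asc_scale_def K_def using qpoch_Q_nonzero[of m] one_minus_Q_Suc_nonzero[of m] c1_nonzero
    by (simp add: qpoch_Suc field_simps)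
  have "(1 - Q ^ Suc K) * (asc_scale (Suc K) * asc_coeff (Suc K) j)
      = asc_scale K / c1 * ((1 - c1 * c2 * Q ^ K) * asc_coeff (Suc K) j)"
    unfolding mult.assoc[symmetric] scale_up by simp
  also have "\<dots> = asc_scale K / c1 * (c1 * asc_coeff K j * ((1 / (c1 * Q ^ j) + c1 * Q ^ j) - (c1 + c2) * Q ^ K))
      - asc_scale K / c1 * (if j = 0 then 0 else asc_coeff K (j - 1) / Q ^ (j - 1))
      - asc_scale K / c1 * (c1 ^ 2 * (1 - Q ^ K) * asc_coeff m j)"
    unfolding K_def asc_coeff_recurrence by (simp add: right_diff_distrib)
  also have "\<dots> = asc_scale K * asc_coeff K j * ((1 / (c1 * Q ^ j) + c1 * Q ^ j) - (c1 + c2) * Q ^ K)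
      - (if j = 0 then 0 else asc_scale K * asc_coeff K (j - 1) / (c1 * Q ^ (j - 1)))
      - (1 - c1 * c2 * Q ^ m) * (asc_scale m * asc_coeff m j)"
    using c1_nonzero scale_down by (simp add: power2_eq_square mult_ac)
  finally show ?thesis unfolding K_def .
qed

text \<open>Summing the coefficient recurrence against \<open>(c\<^sub>1e, c\<^sub>1e';q)\<^sub>j\<close> gives the three-term
  recurrence of \<open>Q\<^sub>k/(q;q)\<^sub>k\<close>; the shifted terms cancel by \<open>cos_times_theta_poch\<close>.\<close>
lemma asc_sum_recurrence:
  "(1 - Q ^ Suc (Suc m)) * asc_sum (Suc (Suc m))
     = (e + e' - (c1 + c2) * Q ^ Suc m) * asc_sum (Suc m) - (1 - c1 * c2 * Q ^ m) * asc_sum m"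
proof -
  define K where "K = Suc m"
  define N where "N = Suc (Suc K)"
  define T where "T j = asc_scale K * asc_coeff K j" for j
  define d where "d j = 1 / (c1 * Q ^ j) + c1 * Q ^ j" for j
  define X where "X j = (if j = 0 then 0 else asc_scale K * asc_coeff K (j - 1) / (c1 * Q ^ (j - 1)))" for j
  have sum_K: "asc_sum K = (\<Sum>j<N. T j * theta_poch j)" unfolding T_def N_def by (rule asc_sum_extend) simp
  have sum_m: "asc_sum m = (\<Sum>j<N. asc_scale m * asc_coeff m j * theta_poch j)"
    unfolding N_def K_def by (rule asc_sum_extend) simp
  have sum_SK: "asc_sum (Suc K) = (\<Sum>j<N. asc_scale (Suc K) * asc_coeff (Suc K) j * theta_poch j)"
    unfolding N_def by (rule asc_sum_extend) simp
  have "(1 - Q ^ Suc K) * asc_sum (Suc K)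
      = (\<Sum>j<N. (1 - Q ^ Suc K) * (asc_scale (Suc K) * asc_coeff (Suc K) j) * theta_poch j)"
    unfolding sum_SK by (simp add: sum_distrib_left mult_ac)
  also have "\<dots> = (\<Sum>j<N. T j * d j * theta_poch j - (c1 + c2) * Q ^ K * (T j * theta_poch j)
      - X j * theta_poch j - (1 - c1 * c2 * Q ^ m) * (asc_scale m * asc_coeff m j * theta_poch j))"
    unfolding K_def asc_term_recurrence T_def d_def X_def by (simp add: algebra_simps)
  also have "\<dots> = (\<Sum>j<N. T j * d j * theta_poch j) - (c1 + c2) * Q ^ K * asc_sum K
      - (\<Sum>j<N. X j * theta_poch j) - (1 - c1 * c2 * Q ^ m) * asc_sum m"
    unfolding sum_K sum_m by (simp add: sum_subtractf sum_distrib_left)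
  finally have expanded: "(1 - Q ^ Suc K) * asc_sum (Suc K) = (\<Sum>j<N. T j * d j * theta_poch j)
      - (c1 + c2) * Q ^ K * asc_sum K - (\<Sum>j<N. X j * theta_poch j) - (1 - c1 * c2 * Q ^ m) * asc_sum m" .
  have "(e + e') * asc_sum K = (\<Sum>j<N. T j * ((e + e') * theta_poch j))"
    unfolding sum_K by (simp add: sum_distrib_left mult_ac)
  also have "\<dots> = (\<Sum>j<N. T j * d j * theta_poch j) - (\<Sum>j<N. T j * (theta_poch (Suc j) / (c1 * Q ^ j)))"
    unfolding cos_times_theta_poch d_def by (simp add: sum_subtractf algebra_simps)
  finally have cos_sum: "(e + e') * asc_sum K
      = (\<Sum>j<N. T j * d j * theta_poch j) - (\<Sum>j<N. T j * (theta_poch (Suc j) / (c1 * Q ^ j)))" .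
  have "(\<Sum>j<N. X j * theta_poch j) = (\<Sum>j<Suc K. T j * (theta_poch (Suc j) / (c1 * Q ^ j)))"
    unfolding N_def sum.lessThan_Suc_shift by (simp add: X_def T_def)
  also have "\<dots> = (\<Sum>j<N. T j * (theta_poch (Suc j) / (c1 * Q ^ j)))"
    unfolding N_def using asc_coeff_vanishes[of K "Suc K"] by (simp add: T_def)
  finally have shifted: "(\<Sum>j<N. X j * theta_poch j) = (\<Sum>j<N. T j * (theta_poch (Suc j) / (c1 * Q ^ j)))" .
  have "(1 - Q ^ Suc K) * asc_sum (Suc K)
      = (e + e' - (c1 + c2) * Q ^ K) * asc_sum K - (1 - c1 * c2 * Q ^ m) * asc_sum m"
    unfolding left_diff_distrib[of "e + e'"] cos_sum expanded shifted by (simp add: algebra_simps)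
  then show ?thesis unfolding K_def .
qed

text \<open>The three-term recurrence of \<open>Q\<^sub>k/(q;q)\<^sub>k\<close> together with its initial values; it
  determines the sequence uniquely.\<close>
definition asc_recurrence :: "(nat \<Rightarrow> complex) \<Rightarrow> bool" where
  "asc_recurrence u \<longleftrightarrow> u 0 = 1 \<and> (1 - Q) * u 1 = e + e' - c1 - c2 \<and>
     (\<forall>m. (1 - Q ^ Suc (Suc m)) * u (Suc (Suc m))
            = (e + e' - (c1 + c2) * Q ^ Suc m) * u (Suc m) - (1 - c1 * c2 * Q ^ m) * u m)"

lemma asc_recurrence_unique:
  assumes "asc_recurrence u" "asc_recurrence v"
  shows "u = v"
proof -
  have "u k = v k \<and> u (Suc k) = v (Suc k)" for k
  proof (induction k)
    case 0
    have "1 - Q \<noteq> 0" using one_minus_Q_Suc_nonzero[of 0] by simp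
    with assms show ?case unfolding asc_recurrence_def by (metis One_nat_def mult_left_cancel)
  next
    case (Suc k)
    have "1 - Q ^ Suc (Suc k) \<noteq> 0" using one_minus_Q_Suc_nonzero[of "Suc k"] by simp
    moreover have "(1 - Q ^ Suc (Suc k)) * u (Suc (Suc k)) = (1 - Q ^ Suc (Suc k)) * v (Suc (Suc k))"
      using assms Suc.IH unfolding asc_recurrence_def by simp
    ultimately show ?case using Suc.IH by simp
  qed
  then show ?thesis by auto
qed

lemma asc_sum_recurrence_holds: "asc_recurrence asc_sum"
proof -
  have "asc_sum 0 = 1" unfolding asc_sum_def asc_scale_def theta_poch_def by simp
  moreover have "(1 - Q) * asc_sum 1 = e + e' - c1 - c2"
  proof -
    have nz: "1 - c1 * c2 \<noteq> 0" "1 - Q \<noteq> 0"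
      using one_minus_c1c2_nonzero[of 0] one_minus_Q_Suc_nonzero[of 0] by simp_all
    have theta_1: "theta_poch 1 = 1 - c1 * (e + e') + c1 ^ 2"
      using theta_poch_Suc[of 0] by (simp add: theta_poch_def)
    have "asc_coeff 1 1 = (1 - inverse Q) * Q / ((1 - Q) * (1 - c1 * c2))"
      unfolding asc_coeff_def by (simp add: qpoch_def)
    also have "(1 - inverse Q) * Q = - (1 - Q)" using Q_nonzero by (simp add: field_simps)
    finally have "asc_coeff 1 1 = - (1 - Q) / ((1 - Q) * (1 - c1 * c2))" .
    then have coeff_1: "asc_coeff 1 1 = - 1 / (1 - c1 * c2)"
      unfolding minus_divide_left[symmetric] nonzero_divide_mult_cancel_left[OF nz(2)] by simp
    have "asc_sum 1 = asc_scale 1 * (1 + asc_coeff 1 1 * theta_poch 1)"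
      unfolding asc_sum_def by (simp add: algebra_simps theta_poch_def)
    also have "asc_scale 1 = (1 - c1 * c2) / ((1 - Q) * c1)"
      unfolding asc_scale_def by (simp add: qpoch_def)
    finally have sum_1: "asc_sum 1 = (1 - c1 * c2) / ((1 - Q) * c1) * (1 + (- 1 / (1 - c1 * c2)) * theta_poch 1)"
      unfolding coeff_1 .
    have cancel: "u * (v / (u * c) * (1 + (- 1 / v) * P)) = (v - P) / c"
      if "u \<noteq> 0" "v \<noteq> 0" "c \<noteq> 0" for u v c P :: complex
      using that by (simp add: field_simps)
    have "(1 - Q) * asc_sum 1 = (1 - c1 * c2 - theta_poch 1) / c1"
      unfolding sum_1 by (rule cancel[OF nz(2) nz(1) c1_nonzero])
    also have "\<dots> = e + e' - c1 - c2"
      unfolding theta_1 using c1_nonzero by (simp add: field_simps power2_eq_square)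
    finally show ?thesis .
  qed
  ultimately show ?thesis
    unfolding asc_recurrence_def using asc_sum_recurrence by simp
qed

end

subsection \<open>The generating function of the Al-Salam--Chihara polynomials\<close>

definition fps_dilate :: "real \<Rightarrow> complex fps \<Rightarrow> complex fps" where
  "fps_dilate q F = Abs_fps (\<lambda>n. of_real q ^ n * fps_nth F n)"

lemma fps_dilate_nth [simp]: "fps_nth (fps_dilate q F) n = of_real q ^ n * fps_nth F n"
  by (simp add: fps_dilate_def)

lemma fps_dilate_mult: "fps_dilate q (F * G) = fps_dilate q F * fps_dilate q G"
proof (rule fps_ext)
  fix n
  have "fps_nth (fps_dilate q (F * G)) n = (\<Sum>i=0..n. of_real q ^ n * (fps_nth F i * fps_nth G (n - i)))"
    by (simp add: fps_mult_nth sum_distrib_left)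
  also have "\<dots> = (\<Sum>i=0..n. (of_real q ^ i * fps_nth F i) * (of_real q ^ (n - i) * fps_nth G (n - i)))"
  proof (rule sum.cong[OF refl])
    fix i assume "i \<in> {0..n}"
    then have "(of_real q :: complex) ^ n = of_real q ^ i * of_real q ^ (n - i)"
      by (simp add: power_add[symmetric])
    then show "of_real q ^ n * (fps_nth F i * fps_nth G (n - i))
        = (of_real q ^ i * fps_nth F i) * (of_real q ^ (n - i) * fps_nth G (n - i))"
      by (simp add: mult_ac)
  qed
  also have "\<dots> = fps_nth (fps_dilate q F * fps_dilate q G) n" by (simp add: fps_mult_nth)
  finally show "fps_nth (fps_dilate q (F * G)) n = fps_nth (fps_dilate q F * fps_dilate q G) n" .
qed

lemma fps_first_order_qdifference:
  fixes f :: "nat \<Rightarrow> complex"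
  assumes f0: "f 0 = 1"
    and rec: "\<And>m. (1 - of_real q ^ Suc m) * f (Suc m) = (a - c * of_real q ^ m) * f m"
  shows "(1 - fps_const a * fps_X) * Abs_fps f = (1 - fps_const c * fps_X) * fps_dilate q (Abs_fps f)"
proof (rule fps_ext)
  fix n
  show "fps_nth ((1 - fps_const a * fps_X) * Abs_fps f) n
      = fps_nth ((1 - fps_const c * fps_X) * fps_dilate q (Abs_fps f)) n"
  proof (cases n)
    case 0
    then show ?thesis by (simp add: left_diff_distrib mult.assoc f0)
  next
    case (Suc m)
    have "f (Suc m) - a * f m = of_real q ^ Suc m * f (Suc m) - c * (of_real q ^ m * f m)"
      using rec[of m] by (simp add: algebra_simps)
    then show ?thesis using Suc by (simp add: left_diff_distrib mult.assoc)
  qed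
qed

context asc_setting
begin

text \<open>The two q-binomial series whose product is the generating function:
  \<open>\<Sum> (c\<^sub>1e';q)\<^sub>m/(q;q)\<^sub>m (te)^m = (c\<^sub>1t;q)\<^sub>\<infinity>/(te;q)\<^sub>\<infinity>\<close> and its mirror image.\<close>
definition left_coeff :: "nat \<Rightarrow> complex" where
  "left_coeff m = qbinom_coeff (c1 * e') q m * e ^ m"

definition right_coeff :: "nat \<Rightarrow> complex" where
  "right_coeff m = qbinom_coeff (c2 * e) q m * e' ^ m"

definition cauchy_coeff :: "nat \<Rightarrow> complex" where
  "cauchy_coeff k = (\<Sum>i\<le>k. left_coeff i * right_coeff (k - i))"

lemma left_coeff_recurrence: "(1 - Q ^ Suc m) * left_coeff (Suc m) = (e - c1 * Q ^ m) * left_coeff m"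
proof -
  have "(1 - Q ^ Suc m) * left_coeff (Suc m) = ((1 - Q ^ Suc m) * qbinom_coeff (c1 * e') q (Suc m)) * e * e ^ m"
    unfolding left_coeff_def by (simp add: mult_ac)
  also have "\<dots> = qbinom_coeff (c1 * e') q m * ((1 - c1 * e' * Q ^ m) * e) * e ^ m"
    unfolding qbinom_coeff_Suc[OF q_pos q_less_1] by (simp add: mult_ac)
  also have "(1 - c1 * e' * Q ^ m) * e = e - c1 * Q ^ m"
    using e_e' by (simp add: algebra_simps)
  finally show ?thesis unfolding left_coeff_def by (simp add: mult_ac)
qed

lemma right_coeff_recurrence: "(1 - Q ^ Suc m) * right_coeff (Suc m) = (e' - c2 * Q ^ m) * right_coeff m"
proof -
  have "(1 - Q ^ Suc m) * right_coeff (Suc m) = ((1 - Q ^ Suc m) * qbinom_coeff (c2 * e) q (Suc m)) * e' * e' ^ m"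
    unfolding right_coeff_def by (simp add: mult_ac)
  also have "\<dots> = qbinom_coeff (c2 * e) q m * ((1 - c2 * e * Q ^ m) * e') * e' ^ m"
    unfolding qbinom_coeff_Suc[OF q_pos q_less_1] by (simp add: mult_ac)
  also have "(1 - c2 * e * Q ^ m) * e' = e' - c2 * Q ^ m"
    using e_e' by (simp add: algebra_simps)
  finally show ?thesis unfolding right_coeff_def by (simp add: mult_ac)
qed

lemma cauchy_fps_qdifference:
  "(1 - fps_const (e + e') * fps_X + fps_X ^ 2) * (Abs_fps left_coeff * Abs_fps right_coeff)
   = (1 - fps_const (c1 + c2) * fps_X + fps_const (c1 * c2) * fps_X ^ 2)
     * fps_dilate q (Abs_fps left_coeff * Abs_fps right_coeff)"
proof -
  have left: "(1 - fps_const e * fps_X) * Abs_fps left_coeff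
      = (1 - fps_const c1 * fps_X) * fps_dilate q (Abs_fps left_coeff)"
    by (rule fps_first_order_qdifference[OF _ left_coeff_recurrence]) (simp add: left_coeff_def)
  have right: "(1 - fps_const e' * fps_X) * Abs_fps right_coeff
      = (1 - fps_const c2 * fps_X) * fps_dilate q (Abs_fps right_coeff)"
    by (rule fps_first_order_qdifference[OF _ right_coeff_recurrence]) (simp add: right_coeff_def)
  have factor_e: "(1 - fps_const e * fps_X) * (1 - fps_const e' * fps_X)
      = (1 - fps_const (e + e') * fps_X + fps_X ^ 2 :: complex fps)"
  proof -
    have "fps_const e * fps_const e' = (1 :: complex fps)" using e_e' by (simp add: fps_const_mult)
    then show ?thesis unfolding fps_const_add[symmetric] by (simp add: algebra_simps power2_eq_square)
  qed
  have factor_c: "(1 - fps_const c1 * fps_X) * (1 - fps_const c2 * fps_X)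
      = (1 - fps_const (c1 + c2) * fps_X + fps_const (c1 * c2) * fps_X ^ 2 :: complex fps)"
    unfolding fps_const_add[symmetric] fps_const_mult[symmetric] by (simp add: algebra_simps power2_eq_square)
  have "(1 - fps_const (e + e') * fps_X + fps_X ^ 2) * (Abs_fps left_coeff * Abs_fps right_coeff)
      = ((1 - fps_const e * fps_X) * Abs_fps left_coeff) * ((1 - fps_const e' * fps_X) * Abs_fps right_coeff)"
    unfolding factor_e[symmetric] by (simp add: mult_ac)
  also have "\<dots> = ((1 - fps_const c1 * fps_X) * (1 - fps_const c2 * fps_X))
      * (fps_dilate q (Abs_fps left_coeff) * fps_dilate q (Abs_fps right_coeff))"
    unfolding left right by (simp add: mult_ac)
  finally show ?thesis unfolding factor_c fps_dilate_mult .
qed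

lemma cauchy_coeff_recurrence_holds: "asc_recurrence cauchy_coeff"
proof -
  define H where "H = Abs_fps left_coeff * Abs_fps right_coeff"
  have H_nth: "fps_nth H k = cauchy_coeff k" for k
    unfolding H_def cauchy_coeff_def by (simp add: fps_mult_nth atLeast0AtMost)
  have coeffs: "cauchy_coeff n - (e + e') * (if n = 0 then 0 else cauchy_coeff (n - 1))
        + (if n < 2 then 0 else cauchy_coeff (n - 2))
      = Q ^ n * cauchy_coeff n - (c1 + c2) * (if n = 0 then 0 else Q ^ (n - 1) * cauchy_coeff (n - 1))
        + c1 * c2 * (if n < 2 then 0 else Q ^ (n - 2) * cauchy_coeff (n - 2))" for n
  proof -
    have "fps_nth ((1 - fps_const (e + e') * fps_X + fps_X ^ 2) * H) n
        = fps_nth ((1 - fps_const (c1 + c2) * fps_X + fps_const (c1 * c2) * fps_X ^ 2) * fps_dilate q H) n"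
      using cauchy_fps_qdifference unfolding H_def by simp
    moreover have "fps_nth ((1 - fps_const (e + e') * fps_X + fps_X ^ 2) * H) n
        = fps_nth H n - (e + e') * (if n = 0 then 0 else fps_nth H (n - 1))
          + (if n < 2 then 0 else fps_nth H (n - 2))"
      by (simp add: ring_distribs mult.assoc fps_X_power_mult_nth del: power_Suc)
    moreover have "fps_nth ((1 - fps_const (c1 + c2) * fps_X + fps_const (c1 * c2) * fps_X ^ 2) * fps_dilate q H) n
        = fps_nth (fps_dilate q H) n - (c1 + c2) * (if n = 0 then 0 else fps_nth (fps_dilate q H) (n - 1))
          + c1 * c2 * (if n < 2 then 0 else fps_nth (fps_dilate q H) (n - 2))"
      by (simp only: ring_distribs mult.assoc fps_X_power_mult_nth fps_add_nth fps_sub_nth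
          fps_mult_left_const_nth fps_X_mult_nth mult_1 fps_one_nth)
    ultimately show ?thesis unfolding H_nth fps_dilate_nth by (simp split: if_splits)
  qed
  have "cauchy_coeff 0 = 1" unfolding cauchy_coeff_def left_coeff_def right_coeff_def by simp
  moreover from this have "(1 - Q) * cauchy_coeff 1 = e + e' - c1 - c2"
    using coeffs[of 1] by (simp add: algebra_simps)
  moreover have "(1 - Q ^ Suc (Suc m)) * cauchy_coeff (Suc (Suc m))
      = (e + e' - (c1 + c2) * Q ^ Suc m) * cauchy_coeff (Suc m) - (1 - c1 * c2 * Q ^ m) * cauchy_coeff m" for m
    using coeffs[of "Suc (Suc m)"] by (simp add: algebra_simps)
  ultimately show ?thesis unfolding asc_recurrence_def by blast
qed

lemma asc_sum_eq_cauchy_coeff: "asc_sum = cauchy_coeff"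
  by (rule asc_recurrence_unique[OF asc_sum_recurrence_holds cauchy_coeff_recurrence_holds])

text \<open>The generating function \<open>\<Sum>\<^sub>k Q\<^sub>k/(q;q)\<^sub>k t^k = (c\<^sub>1t, c\<^sub>2t;q)\<^sub>\<infinity>/(te, te';q)\<^sub>\<infinity>\<close>, as the
  Cauchy product of two instances of the q-binomial theorem.\<close>
lemma asc_sum_generating_function:
  assumes t: "norm t < 1"
  shows "(\<lambda>k. asc_sum k * t ^ k) sums
    (qpoch_inf (c1 * t) q * qpoch_inf (c2 * t) q / (qpoch_inf (t * e) q * qpoch_inf (t * e') q))"
proof -
  define f where "f i = qbinom_coeff (c1 * e') q i * (t * e) ^ i" for i
  define g where "g i = qbinom_coeff (c2 * e) q i * (t * e') ^ i" for i
  have small: "norm (t * e) < 1" "norm (t * e') < 1" using t by (simp_all add: norm_mult)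
  have "f sums (qpoch_inf (c1 * e' * (t * e)) q / qpoch_inf (t * e) q)"
    unfolding f_def by (rule q_binomial[OF q_pos q_less_1 small(1)])
  moreover have "c1 * e' * (t * e) = c1 * t" using e_e' by (simp add: mult_ac)
  ultimately have sum_f: "suminf f = qpoch_inf (c1 * t) q / qpoch_inf (t * e) q"
    using sums_unique by metis
  have "g sums (qpoch_inf (c2 * e * (t * e')) q / qpoch_inf (t * e') q)"
    unfolding g_def by (rule q_binomial[OF q_pos q_less_1 small(2)])
  moreover have "c2 * e * (t * e') = c2 * t" using e_e' by (simp add: mult_ac)
  ultimately have sum_g: "suminf g = qpoch_inf (c2 * t) q / qpoch_inf (t * e') q"
    using sums_unique by metis
  have "(\<lambda>k. \<Sum>i\<le>k. f i * g (k - i)) sums (suminf f * suminf g)"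
    using qbinom_series_summable_norm[OF q_pos q_less_1 small(1)]
      qbinom_series_summable_norm[OF q_pos q_less_1 small(2)]
    unfolding f_def g_def by (rule Cauchy_product_sums)
  moreover have "(\<Sum>i\<le>k. f i * g (k - i)) = asc_sum k * t ^ k" for k
  proof -
    have "(\<Sum>i\<le>k. f i * g (k - i)) = (\<Sum>i\<le>k. left_coeff i * right_coeff (k - i) * t ^ k)"
    proof (rule sum.cong[OF refl])
      fix i assume "i \<in> {..k}"
      then have "t ^ k = t ^ i * t ^ (k - i)" by (simp add: power_add[symmetric])
      then show "f i * g (k - i) = left_coeff i * right_coeff (k - i) * t ^ k"
        unfolding f_def g_def left_coeff_def right_coeff_def by (simp add: power_mult_distrib mult_ac)
    qed
    then show ?thesis by (simp add: asc_sum_eq_cauchy_coeff cauchy_coeff_def sum_distrib_right)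
  qed
  ultimately show ?thesis unfolding sum_f sum_g by (simp add: field_simps)
qed

end

theorem al_salam_chihara_generating_function:
  fixes q \<theta> :: real and c1 c2 t :: complex
  assumes "0 < q" "q < 1" "c1 \<noteq> 0" "\<And>i. c1 * c2 * of_real q ^ i \<noteq> 1"
    and "0 \<le> \<theta>" "\<theta> \<le> pi" and "norm t < 1"
  shows "(\<lambda>k. al_salam_chihara k (cos \<theta>) c1 c2 q / qpoch (of_real q) q k * t ^ k) sums
    (qpoch_inf (c1 * t) q * qpoch_inf (c2 * t) q / (qpoch_inf (t * cis \<theta>) q * qpoch_inf (t * cis (- \<theta>)) q))"
proof -
  interpret asc_setting q c1 c2 \<theta> using assms(1-4) by unfold_locales
  show ?thesis
    using asc_sum_generating_function[OF assms(7)]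
    unfolding asc_sum_eq[OF assms(5,6), symmetric] e_def e'_def .
qed

subsection \<open>Expansion of the little q-Jacobi polynomials\<close>

lemma qpoch_inf_quotient_shift:
  assumes q: "0 \<le> q" "q < 1"
    and nz: "qpoch x1 q j \<noteq> 0" "qpoch x2 q j \<noteq> 0" "qpoch y1 q j \<noteq> 0" "qpoch y2 q j \<noteq> 0"
      "qpoch_inf y1 q \<noteq> 0" "qpoch_inf y2 q \<noteq> 0"
  shows "qpoch_inf (x1 * of_real q ^ j) q * qpoch_inf (x2 * of_real q ^ j) q
           / (qpoch_inf (y1 * of_real q ^ j) q * qpoch_inf (y2 * of_real q ^ j) q)
       = qpoch_inf x1 q * qpoch_inf x2 q / (qpoch_inf y1 q * qpoch_inf y2 q)
         * (qpoch y1 q j * qpoch y2 q j / (qpoch x1 q j * qpoch x2 q j))"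
  unfolding qpoch_inf_div_qpoch[OF q, symmetric, OF nz(1)] qpoch_inf_div_qpoch[OF q, symmetric, OF nz(2)]
    qpoch_inf_div_qpoch[OF q, symmetric, OF nz(3)] qpoch_inf_div_qpoch[OF q, symmetric, OF nz(4)]
  using nz by (simp add: field_simps)

lemma askey_wilson_as_little_q_jacobi_sum:
  fixes q \<theta> :: real and a b t c1 c2 :: complex and n :: nat
  assumes q: "q \<noteq> 0" and t: "t \<noteq> 0" and c1c2: "c1 * c2 = b * of_real q"
    and \<theta>: "0 \<le> \<theta>" "\<theta> \<le> pi"
  shows "askey_wilson n (cos \<theta>) t c1 c2 (a * of_real q / t) q
    = qpoch (t * c1) q n * qpoch (t * c2) q n * qpoch (a * of_real q) q n / t ^ n
      * (\<Sum>j<Suc n. little_q_jacobi_coeff n a b q j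
           * (qpoch (t * cis \<theta>) q j * qpoch (t * cis (- \<theta>)) q j / (qpoch (t * c1) q j * qpoch (t * c2) q j)))"
proof -
  have a1a4: "t * (a * of_real q / t) = a * of_real q" using t by simp
  have "t * c1 * c2 * (a * of_real q / t) * of_real q ^ n / of_real q = (c1 * c2) * a * of_real q ^ n"
    using t q by (simp add: field_simps)
  then have top: "t * c1 * c2 * (a * of_real q / t) * of_real q ^ n / of_real q = a * b * of_real q ^ (n + 1)"
    unfolding c1c2 by (simp add: mult_ac)
  show ?thesis
    unfolding askey_wilson_sum[OF q \<theta>] a1a4 top little_q_jacobi_coeff_def
    by (simp add: divide_inverse mult_ac)
qed

text \<open>The right-hand side of the expansion theorem as a finite sum of values of the generating
  function \<open>G\<close> at the points \<open>tq^j\<close>: the finite q-Pochhammer symbols of the \<open>{}_4\<phi>_3\<close> are absorbed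
  into the infinite products.\<close>
lemma askey_wilson_as_generating_sum:
  fixes q \<theta> :: real and a b t c1 c2 :: complex and n :: nat
  assumes q: "0 < q" "q < 1" and t: "t \<noteq> 0" "norm t < 1"
    and c1c2: "c1 * c2 = b * of_real q"
    and tc1: "\<And>i. t * c1 * of_real q ^ i \<noteq> 1" and tc2: "\<And>i. t * c2 * of_real q ^ i \<noteq> 1"
    and aq: "qpoch (a * of_real q) q n \<noteq> 0"
    and \<theta>: "0 \<le> \<theta>" "\<theta> \<le> pi"
  defines "G s \<equiv> qpoch_inf (c1 * s) q * qpoch_inf (c2 * s) q
                  / (qpoch_inf (s * cis \<theta>) q * qpoch_inf (s * cis (- \<theta>)) q)"
  shows "t ^ n * qpoch_inf (t * c1 * of_real q ^ n) q * qpoch_inf (t * c2 * of_real q ^ n) q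
            / (qpoch (a * of_real q) q n * qpoch_inf (t * cis \<theta>) q * qpoch_inf (t * cis (- \<theta>)) q)
          * askey_wilson n (cos \<theta>) t c1 c2 (a * of_real q / t) q
       = (\<Sum>j<Suc n. little_q_jacobi_coeff n a b q j * G (t * of_real q ^ j))"
proof -
  define ratio where "ratio j = qpoch (t * cis \<theta>) q j * qpoch (t * cis (- \<theta>)) q j
                                / (qpoch (t * c1) q j * qpoch (t * c2) q j)" for j
  have small: "norm (t * cis \<theta>) < 1" "norm (t * cis (- \<theta>)) < 1" using t by (simp_all add: norm_mult)
  have nz: "qpoch (t * c1) q j \<noteq> 0" "qpoch (t * c2) q j \<noteq> 0"
    "qpoch (t * cis \<theta>) q j \<noteq> 0" "qpoch (t * cis (- \<theta>)) q j \<noteq> 0"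
    "qpoch_inf (t * cis \<theta>) q \<noteq> 0" "qpoch_inf (t * cis (- \<theta>)) q \<noteq> 0" for j
    using qpoch_nonzero_small[OF _ _ small(1)] qpoch_nonzero_small[OF _ _ small(2)]
      qpoch_inf_nonzero_small[OF _ q(2) small(1)] qpoch_inf_nonzero_small[OF _ q(2) small(2)] q
    by (auto simp: qpoch_nonzero tc1 tc2)
  have prefactor: "t ^ n * qpoch_inf (t * c1 * of_real q ^ n) q * qpoch_inf (t * c2 * of_real q ^ n) q
        / (qpoch (a * of_real q) q n * qpoch_inf (t * cis \<theta>) q * qpoch_inf (t * cis (- \<theta>)) q)
      * (qpoch (t * c1) q n * qpoch (t * c2) q n * qpoch (a * of_real q) q n / t ^ n) = G t"
  proof -
    have split_at_n: "qpoch_inf x q = qpoch x q n * qpoch_inf (x * of_real q ^ n) q" for x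
      using q by (intro qpoch_inf_split) auto
    show ?thesis
      unfolding G_def split_at_n[of "c1 * t"] split_at_n[of "c2 * t"] using t aq nz
      by (simp add: field_simps)
  qed
  have summand: "G (t * of_real q ^ j) = G t * ratio j" for j
    unfolding G_def ratio_def using qpoch_inf_quotient_shift[of q "t * c1" j "t * c2" "t * cis \<theta>" "t * cis (- \<theta>)"]
      q nz by (simp add: mult_ac)
  show ?thesis
    unfolding askey_wilson_as_little_q_jacobi_sum[OF q(1)[THEN less_imp_neq, symmetric] t(1) c1c2 \<theta>,
        folded ratio_def] prefactor[symmetric]
      sum_distrib_left summand
    using q by (simp add: mult_ac)
qed

theorem little_q_jacobi_al_salam_chihara_expansion:
  fixes q \<theta> :: real and a b t c1 c2 :: complex and n :: nat
  assumes q: "0 < q" "q < 1" and t: "t \<noteq> 0" "norm t < 1"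
    and c1: "c1 \<noteq> 0" and c1c2: "c1 * c2 = b * of_real q" and c1c2_ne_1: "\<And>i. c1 * c2 * of_real q ^ i \<noteq> 1"
    and tc1: "\<And>i. t * c1 * of_real q ^ i \<noteq> 1" and tc2: "\<And>i. t * c2 * of_real q ^ i \<noteq> 1"
    and aq: "qpoch (a * of_real q) q n \<noteq> 0"
    and \<theta>: "0 \<le> \<theta>" "\<theta> \<le> pi"
  shows "(\<lambda>k. t ^ k * little_q_jacobi n (of_real (q ^ k)) a b q / qpoch (of_real q) q k
              * al_salam_chihara k (cos \<theta>) c1 c2 q)
         sums (t ^ n * qpoch_inf (t * c1 * of_real q ^ n) q * qpoch_inf (t * c2 * of_real q ^ n) q
                / (qpoch (a * of_real q) q n * qpoch_inf (t * cis \<theta>) q * qpoch_inf (t * cis (- \<theta>)) q)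
               * askey_wilson n (cos \<theta>) t c1 c2 (a * of_real q / t) q)"
proof -
  define w where "w j = little_q_jacobi_coeff n a b q j" for j
  define u where "u k = al_salam_chihara k (cos \<theta>) c1 c2 q / qpoch (of_real q) q k" for k
  have terms: "t ^ k * little_q_jacobi n (of_real (q ^ k)) a b q / qpoch (of_real q) q k
        * al_salam_chihara k (cos \<theta>) c1 c2 q = (\<Sum>j<Suc n. w j * (u k * (t * of_real q ^ j) ^ k))" for k
  proof -
    have "t ^ k * little_q_jacobi n (of_real (q ^ k)) a b q / qpoch (of_real q) q k
          * al_salam_chihara k (cos \<theta>) c1 c2 q = (\<Sum>j<Suc n. w j * of_real (q ^ k) ^ j) * (u k * t ^ k)"
      unfolding little_q_jacobi_sum[OF q(1)[THEN less_imp_neq, symmetric]] w_def u_def by (simp add: mult_ac)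
    also have "\<dots> = (\<Sum>j<Suc n. w j * (u k * (t * of_real q ^ j) ^ k))"
      unfolding sum_distrib_right
      by (rule sum.cong) (simp_all add: power_mult_distrib power_mult[symmetric] mult.commute[of k] mult_ac)
    finally show ?thesis .
  qed
  have "norm (t * of_real q ^ j) < 1" for j
    using norm_mult_qpower_le[of q t j] q t by simp
  then have "(\<lambda>k. \<Sum>j<Suc n. w j * (u k * (t * of_real q ^ j) ^ k)) sums
      (\<Sum>j<Suc n. w j * (qpoch_inf (c1 * (t * of_real q ^ j)) q * qpoch_inf (c2 * (t * of_real q ^ j)) q
         / (qpoch_inf (t * of_real q ^ j * cis \<theta>) q * qpoch_inf (t * of_real q ^ j * cis (- \<theta>)) q)))"
    unfolding u_def using al_salam_chihara_generating_function[OF q c1 c1c2_ne_1 \<theta>]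
    by (intro sums_sum sums_mult) blast
  then show ?thesis
    unfolding terms askey_wilson_as_generating_sum[OF q t c1c2 tc1 tc2 aq \<theta>] w_def .
qed

lemma real_qpower_ne_1:
  fixes x q :: real
  assumes "0 < q" "q < 1" "x < 1 / q"
  shows "complex_of_real x * of_real q * of_real q ^ i \<noteq> 1"
proof -
  have "x * q < 1" using assms by (simp add: pos_less_divide_eq)
  moreover have "x * q * q ^ i \<le> max 0 (x * q)"
    using assms power_le_one[of q i] by (cases "x * q \<le> 0") (auto simp: mult_nonpos_nonneg mult_left_le)
  ultimately have "x * q * q ^ i \<noteq> 1" by linarith
  then show ?thesis by (metis of_real_1 of_real_eq_iff of_real_mult of_real_power)
qed

text \<open>The theorem is the expansion above with \<open>t = \<alpha>\<surd>(aq)\<close>, \<open>c\<^sub>1 = c\<surd>(aq)\<close>, \<open>c\<^sub>2 = (b/c)\<surd>(q/a)\<close>;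
  then \<open>c\<^sub>1c\<^sub>2 = bq\<close>, \<open>tc\<^sub>1 = \<alpha>acq\<close>, \<open>tc\<^sub>2 = \<alpha>bq/c\<close> and \<open>aq/t = \<surd>(aq)/\<alpha>\<close>.\<close>
theorem mainTheorem7:
  fixes q a b \<alpha> \<theta> :: real and c :: complex and n :: nat
  assumes "0 < q" "q < 1"
    and "0 < a" "a < 1 / q"
    and "b < 1 / q"
    and "c \<noteq> 0"
    and "\<And>m::nat. m \<ge> 1 \<Longrightarrow> of_real (\<alpha> * a * q ^ m) * c \<noteq> 1"
    and "\<And>m::nat. m \<ge> 1 \<Longrightarrow> of_real (\<alpha> * b * q ^ m) / c \<noteq> 1"
    and "sqrt (a * q) < \<alpha>" "\<alpha> < 1 / sqrt (a * q)"
    and "0 \<le> \<theta>" "\<theta> \<le> pi"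
  shows "(\<lambda>k. of_real (\<alpha> ^ k) * little_q_jacobi n (of_real (q ^ k)) (of_real a) (of_real b) q
            * of_real (sqrt (a * q) ^ k) / qpoch (of_real q) q k
            * al_salam_chihara k (cos \<theta>) (c * of_real (sqrt (a * q)))
                (of_real b / c * of_real (sqrt (q / a))) q)
         sums
         (of_real (\<alpha> ^ n * sqrt (a * q) ^ n)
            * qpoch_inf (of_real (\<alpha> * a * q ^ (n + 1)) * c) q
            * qpoch_inf (of_real (\<alpha> * b * q ^ (n + 1)) / c) q
          / (qpoch (of_real (a * q)) q n
             * qpoch_inf (of_real (\<alpha> * sqrt (a * q)) * cis \<theta>) q
             * qpoch_inf (of_real (\<alpha> * sqrt (a * q)) * cis (- \<theta>)) q)
          * askey_wilson n (cos \<theta>) (of_real (\<alpha> * sqrt (a * q))) (c * of_real (sqrt (a * q)))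
              (of_real b / c * of_real (sqrt (q / a))) (of_real (sqrt (a * q) / \<alpha>)) q)"
proof -
  define s where "s = sqrt (a * q)"
  define t where "t = complex_of_real (\<alpha> * s)"
  define c1 where "c1 = c * of_real s"
  define c2 where "c2 = of_real b / c * of_real (sqrt (q / a))"
  have "0 < s" unfolding s_def using assms(1,3) by simp
  moreover from this have "0 < \<alpha>" using assms(9) unfolding s_def by linarith
  ultimately have s: "0 < s" "0 < \<alpha>" "s * s = a * q" "sqrt (q / a) * s = q" "\<alpha> * s < 1"
    using assms(1,3,10) unfolding s_def by (auto simp: real_sqrt_mult[symmetric] pos_less_divide_eq)
  have tc1: "t * c1 * of_real q ^ i = of_real (\<alpha> * a * q ^ Suc i) * c" for i
    unfolding t_def c1_def using s(3) by (simp add: mult_ac flip: of_real_mult of_real_power)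
  have tc2: "t * c2 * of_real q ^ i = of_real (\<alpha> * b * q ^ Suc i) / c" for i
    unfolding t_def c2_def using s(4) by (simp add: mult_ac flip: of_real_mult of_real_power)
  have c1c2: "c1 * c2 = of_real b * of_real q"
    unfolding c1_def c2_def using s(4) assms(6) by (simp add: mult_ac flip: of_real_mult of_real_power)
  have t: "t \<noteq> 0" "norm t < 1"
    unfolding t_def norm_of_real using s by (simp_all add: abs_of_pos)
  have "c1 \<noteq> 0" unfolding c1_def using s assms(6) by simp
  have c1c2_ne_1: "c1 * c2 * of_real q ^ i \<noteq> 1" for i
    unfolding c1c2 using real_qpower_ne_1[OF assms(1,2,5)] .
  have tc_ne_1: "t * c1 * of_real q ^ i \<noteq> 1" "t * c2 * of_real q ^ i \<noteq> 1" for i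
    unfolding tc1 tc2 using assms(7,8)[of "Suc i"] by simp_all
  have aq: "qpoch (of_real a * of_real q) q n \<noteq> 0"
    using real_qpower_ne_1[OF assms(1,2,4)] by (intro qpoch_nonzero) auto
  have "of_real a * of_real q / t = of_real (s / \<alpha>)"
    unfolding t_def using s by (simp add: field_simps flip: of_real_mult)
  with little_q_jacobi_al_salam_chihara_expansion[OF assms(1,2) t \<open>c1 \<noteq> 0\<close> c1c2 c1c2_ne_1 tc_ne_1 aq assms(11,12)]
  show ?thesis
    unfolding tc1 tc2 c1_def[symmetric] c2_def[symmetric] s_def[symmetric]
    by (simp add: t_def power_mult_distrib mult_ac)
qed

end
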